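(* Let $r_1,r_2,r_3>0$ with $r_2>\max(r_1,r_3)$. For $L>0$, let $m(y)=r_1\mathbf 1_{y<0}+r_2\mathbf 1_{0\le y<1}+r_3\mathbf 1_{y\ge1}$ and let $\lambda_1(L)=\sup\{\lambda : \exists\,\varphi\in W^{2,1}_{\mathrm{loc}}(\mathbb{R}),\ \varphi>0,\ L^{-2}\varphi''+(m+\lambda)\varphi\le0\}$. Let $\underline{L}=0$ if $r_1=r_3$ and $\underline{L}=\frac{1}{\sqrt{r_2-\max(r_1,r_3)}}\operatorname{arccot}\big(\sqrt{\frac{r_2-\max(r_1,r_3)}{|r_1-r_3|}}\big)$ if $r_1\ne r_3$ ($\operatorname{arccot}$ the inverse of $\cot|_{(0,\pi)}$). Then the map $L\in(0,+\infty)\mapsto\lambda_1(L)$ is continuous, constant on $(0,\underline{L}]$ (possibly empty), decreasing on $(\underline{L},+\infty)$, and satisfies: $\lambda_1(L)\to-\max(r_1,r_3)$ as $L\to\underline{L}^+$; $\lambda_1\Big(\frac\pi2\sqrt{\frac{2r_2-r_1-r_3}{(r_2-r_1)(r_2-r_3)}}\Big)=-\frac{r_2^2-r_1r_3}{2r_2-r_1-r_3}$; and $\lambda_1(L)\to-r_2$ as $L\to+\infty$. *)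

theory Defs
  imports "HOL-Analysis.Analysis"
begin

definition mfun :: "real \<Rightarrow> real \<Rightarrow> real \<Rightarrow> real \<Rightarrow> real" where
  "mfun r1 r2 r3 y = (if y < 0 then r1 else if y < 1 then r2 else r3)"

text \<open>phi is (the continuous representative of) a W^{2,1}_loc(R) function, i.e. phi is
  differentiable with derivative phi' which is locally absolutely continuous:
  phi' x = phi' 0 + integral from 0 to x of a locally integrable phi''.
  phi is positive and L^{-2} phi'' + (m + lam) phi <= 0 almost everywhere.\<close>
definition supersol :: "real \<Rightarrow> real \<Rightarrow> real \<Rightarrow> real \<Rightarrow> real \<Rightarrow> (real \<Rightarrow> real) \<Rightarrow> bool" where
  "supersol r1 r2 r3 L lam \<phi> \<longleftrightarrow>
     (\<exists>\<phi>' \<phi>''.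
        (\<forall>x. (\<phi> has_real_derivative \<phi>' x) (at x)) \<and>
        (\<forall>a b. set_integrable lborel {a..b} \<phi>'') \<and>
        (\<forall>x. \<phi>' x = \<phi>' 0 + (LBINT t=0..x. \<phi>'' t)) \<and>
        (\<forall>x. \<phi> x > 0) \<and>
        (AE y in lborel. \<phi>'' y / L\<^sup>2 + (mfun r1 r2 r3 y + lam) * \<phi> y \<le> 0))"

definition lambda1 :: "real \<Rightarrow> real \<Rightarrow> real \<Rightarrow> real \<Rightarrow> real" where
  "lambda1 r1 r2 r3 L = Sup {lam. \<exists>\<phi>. supersol r1 r2 r3 L lam \<phi>}"

definition arccot :: "real \<Rightarrow> real" where
  "arccot x = (THE y. 0 < y \<and> y < pi \<and> cot y = x)"

definition Lunder :: "real \<Rightarrow> real \<Rightarrow> real \<Rightarrow> real" where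
  "Lunder r1 r2 r3 = (if r1 = r3 then 0 else
     (1 / sqrt (r2 - max r1 r3)) * arccot (sqrt ((r2 - max r1 r3) / \<bar>r1 - r3\<bar>)))"

end

theory Submission
  imports Defs "HOL-Real_Asymp.Real_Asymp"
begin

text \<open>Write \<open>\<lambda> = - \<mu>\<close>. By Sturm comparison a positive supersolution forces \<open>max r1 r3 \<le> \<mu>\<close>
  and, if \<open>\<mu> < r2\<close>, \<open>L \<le> Lcrit \<mu>\<close>, where \<open>Lcrit \<mu>\<close> is the length at which exponentials
  on the outer zones glue in a \<open>C\<^sup>1\<close> way to a positive cosine on \<open>[0, 1]\<close>: the Wronskian of
  the supersolution with a nonnegative subsolution is nonincreasing, and half sine waves,
  decaying exponentials and a shifted cosine serve as subsolutions. Conversely, for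
  \<open>max r1 r3 < \<mu> < r2\<close> and \<open>L \<le> Lcrit \<mu>\<close> the explicit exponential--cosine--cosh/sinh
  function is a positive solution. Since \<open>Lcrit\<close> increases continuously from
  \<open>Lcrit (max r1 r3) = Lunder\<close> to \<open>\<infinity>\<close> at \<open>r2\<close>, \<open>- \<lambda>\<^sub>1\<close> is \<open>max r1 r3\<close> up to \<open>Lunder\<close>
  and the inverse of \<open>Lcrit\<close> beyond, and every claim follows; at the special length the two
  arctangents are complementary.\<close>

section \<open>Sturm comparison for weak supersolutions\<close>

lemma right_dini_nonpos_imp_decreasing:
  fixes F :: "real \<Rightarrow> real"
  assumes "p \<le> q" and cont: "continuous_on {p..q} F"
    and dini: "\<And>x e. x \<in> {p..<q} \<Longrightarrow> 0 < e \<Longrightarrow>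
        \<exists>d>0. \<forall>y. x < y \<and> y < x + d \<and> y \<le> q \<longrightarrow> F y - F x \<le> e * (y - x)"
  shows "F q \<le> F p"
proof -
  have slope: "F q \<le> F p + e * (q - p)" if "0 < e" for e
  proof -
    define S where "S = {x \<in> {p..q}. F x \<le> F p + e * (x - p)}"
    have "closed S" unfolding S_def
      by (rule continuous_on_closed_Collect_le[OF cont]) (auto intro!: continuous_intros)
    moreover have "p \<in> S" using \<open>p \<le> q\<close> by (simp add: S_def)
    moreover have bdd: "bdd_above S" unfolding S_def by (rule bdd_aboveI[of _ q]) auto
    ultimately have sS: "Sup S \<in> S" using closed_contains_Sup by blast
    have "Sup S = q"
    proof (rule ccontr)
      assume "Sup S \<noteq> q"
      with sS have s: "Sup S \<in> {p..<q}" by (auto simp: S_def)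
      then obtain d where "0 < d"
        and d: "\<forall>y. Sup S < y \<and> y < Sup S + d \<and> y \<le> q \<longrightarrow> F y - F (Sup S) \<le> e * (y - Sup S)"
        using dini \<open>0 < e\<close> by blast
      define y where "y = min (Sup S + d / 2) q"
      have y: "Sup S < y" "y < Sup S + d" "y \<le> q" using \<open>0 < d\<close> s by (auto simp: y_def)
      with d sS s have "y \<in> S" by (force simp: S_def algebra_simps)
      then have "y \<le> Sup S" using bdd by (rule cSup_upper)
      with y show False by simp
    qed
    with sS show ?thesis by (simp add: S_def)
  qed
  show ?thesis
  proof (rule field_le_epsilon)
    fix e :: real assume "0 < e"
    have "e / (q - p + 1) * (q - p) \<le> e"
      using \<open>p \<le> q\<close> \<open>0 < e\<close> by (simp add: field_simps)
    with slope[of "e / (q - p + 1)"] \<open>p \<le> q\<close> \<open>0 < e\<close> show "F q \<le> F p + e" by simp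
  qed
qed

lemma right_slope_le_if_deriv_nonpos:
  assumes "(R has_real_derivative D) (at x within {x..q})" "D \<le> 0" "0 < e"
  shows "\<exists>d>0. \<forall>y. x < y \<and> y < x + d \<and> y \<le> q \<longrightarrow> R y - R x \<le> e * (y - x)"
proof -
  have "\<forall>\<^sub>F y in at x within {x..q}. (R y - R x) / (y - x) < e"
    using assms unfolding has_field_derivative_iff by (auto elim!: order_tendstoD(2))
  then obtain d where "0 < d"
    and d: "\<And>y. y \<in> {x..q} \<Longrightarrow> y \<noteq> x \<Longrightarrow> dist y x < d \<Longrightarrow> (R y - R x) / (y - x) < e"
    unfolding eventually_at by blast
  show ?thesis
  proof (intro exI[of _ d] conjI allI impI)
    fix y assume "x < y \<and> y < x + d \<and> y \<le> q"
    with d[of y] show "R y - R x \<le> e * (y - x)" by (simp add: dist_real_def divide_less_eq)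
  qed (fact \<open>0 < d\<close>)
qed

text \<open>\<open>\<phi>'' \<le> c \<phi>\<close> on \<open>I\<close>, integrated once, so that it makes sense when \<open>\<phi>'\<close> is only
  absolutely continuous.\<close>
definition weak_deriv2_le :: "real set \<Rightarrow> real \<Rightarrow> (real \<Rightarrow> real) \<Rightarrow> (real \<Rightarrow> real) \<Rightarrow> bool" where
  "weak_deriv2_le I c \<phi> \<phi>' \<longleftrightarrow>
     (\<forall>x y. x \<le> y \<longrightarrow> {x..y} \<subseteq> I \<longrightarrow> \<phi>' y - \<phi>' x \<le> c * integral {x..y} \<phi>)"

lemma weak_deriv2_le_subset:
  "weak_deriv2_le I c \<phi> \<phi>' \<Longrightarrow> J \<subseteq> I \<Longrightarrow> weak_deriv2_le J c \<phi> \<phi>'"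
  unfolding weak_deriv2_le_def by blast

lemma weak_deriv2_le_reflect:
  assumes "weak_deriv2_le I c \<phi> \<phi>'"
  shows "weak_deriv2_le (uminus ` I) c (\<lambda>x. \<phi> (- x)) (\<lambda>x. - \<phi>' (- x))"
  unfolding weak_deriv2_le_def
proof (intro allI impI)
  fix x y :: real
  assume "x \<le> y" "{x..y} \<subseteq> uminus ` I"
  then have "{-y..-x} \<subseteq> I"
    using image_mono[of "{x..y}" "uminus ` I" uminus] by (simp add: image_image)
  with assms \<open>x \<le> y\<close> have "\<phi>' (- x) - \<phi>' (- y) \<le> c * integral {-y..-x} \<phi>"
    unfolding weak_deriv2_le_def by simp
  also have "integral {-y..-x} \<phi> = integral {x..y} (\<lambda>t. \<phi> (- t))"
    using Henstock_Kurzweil_Integration.integral_reflect_real[of "-x" "-y" \<phi>] by simp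
  finally show "- \<phi>' (- y) - - \<phi>' (- x) \<le> c * integral {x..y} (\<lambda>t. \<phi> (- t))" by simp
qed

locale positive_C1 =
  fixes \<phi> \<phi>' :: "real \<Rightarrow> real"
  assumes has_deriv: "\<And>x. (\<phi> has_real_derivative \<phi>' x) (at x)"
    and isCont_deriv: "\<And>x. isCont \<phi>' x"
    and pos: "\<And>x. 0 < \<phi> x"
begin

lemma reflect: "positive_C1 (\<lambda>x. \<phi> (- x)) (\<lambda>x. - \<phi>' (- x))"
proof
  fix x :: real
  show "((\<lambda>x. \<phi> (- x)) has_real_derivative - \<phi>' (- x)) (at x)"
    using DERIV_chain2[OF has_deriv DERIV_minus[OF DERIV_ident]] by simp
  show "isCont (\<lambda>x. - \<phi>' (- x)) x"
    by (intro isCont_minus isCont_o2[OF _ isCont_deriv] continuous_intros)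
  show "0 < \<phi> (- x)" by (rule pos)
qed

lemma wronskian_majorant_deriv:
  assumes "(\<psi> has_real_derivative \<psi>' x) (at x)" "(\<psi>' has_real_derivative \<psi>'' x) (at x)" "x \<le> q"
  shows "((\<lambda>y. c * \<psi> y * integral {x..y} \<phi> + \<phi>' x * (\<psi> y - \<psi> x) - \<phi> y * \<psi>' y + \<phi> x * \<psi>' x)
      has_real_derivative \<phi> x * (c * \<psi> x - \<psi>'' x)) (at x within {x..q})"
proof -
  have "continuous_on {x..q} \<phi>"
    using has_deriv by (intro continuous_at_imp_continuous_on ballI DERIV_isCont) blast
  then have "((\<lambda>y. integral {x..y} \<phi>) has_real_derivative \<phi> x) (at x within {x..q})"
    using \<open>x \<le> q\<close> by (intro integral_has_real_derivative) auto
  then show ?thesis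
    by (auto intro!: derivative_eq_intros has_field_derivative_at_within[OF assms(1)]
        has_field_derivative_at_within[OF has_deriv] has_field_derivative_at_within[OF assms(2)]
        simp: algebra_simps)
qed

lemma wronskian_decreasing:
  assumes "p \<le> q" and weak: "weak_deriv2_le {p..q} c \<phi> \<phi>'"
    and d\<psi>: "\<And>x. x \<in> {p..q} \<Longrightarrow> (\<psi> has_real_derivative \<psi>' x) (at x)"
    and d\<psi>': "\<And>x. x \<in> {p..q} \<Longrightarrow> (\<psi>' has_real_derivative \<psi>'' x) (at x)"
    and \<psi>_nonneg: "\<And>x. x \<in> {p..q} \<Longrightarrow> 0 \<le> \<psi> x"
    and sub: "\<And>x. x \<in> {p..q} \<Longrightarrow> c * \<psi> x \<le> \<psi>'' x"
  shows "\<phi>' q * \<psi> q - \<phi> q * \<psi>' q \<le> \<phi>' p * \<psi> p - \<phi> p * \<psi>' p"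
proof -
  define W where "W x = \<phi>' x * \<psi> x - \<phi> x * \<psi>' x" for x
  have cont: "continuous_on {p..q} f"
    if "\<And>x. x \<in> {p..q} \<Longrightarrow> (f has_real_derivative f' x) (at x)" for f f'
    using that by (intro continuous_at_imp_continuous_on ballI DERIV_isCont) blast
  have "W q \<le> W p"
  proof (rule right_dini_nonpos_imp_decreasing[OF \<open>p \<le> q\<close>])
    show "continuous_on {p..q} W" unfolding W_def
      by (intro continuous_intros cont[OF has_deriv] cont[OF d\<psi>] cont[OF d\<psi>']
          continuous_at_imp_continuous_on ballI isCont_deriv)
  next
    fix x e :: real
    assume x: "x \<in> {p..<q}" and "0 < e"
    then have x': "x \<in> {p..q}" by simp
    txt \<open>By the weak inequality \<open>W y - W x \<le> R y\<close> for \<open>y \<ge> x\<close>, and \<open>R\<close> vanishes at \<open>x\<close>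
      with nonpositive right derivative there.\<close>
    define R where "R y = c * \<psi> y * integral {x..y} \<phi> + \<phi>' x * (\<psi> y - \<psi> x)
      - \<phi> y * \<psi>' y + \<phi> x * \<psi>' x" for y
    have "(R has_real_derivative \<phi> x * (c * \<psi> x - \<psi>'' x)) (at x within {x..q})"
      unfolding R_def using d\<psi>[OF x'] d\<psi>'[OF x'] x by (intro wronskian_majorant_deriv) auto
    moreover have "\<phi> x * (c * \<psi> x - \<psi>'' x) \<le> 0"
      using pos[of x] sub[OF x'] by (simp add: mult_nonneg_nonpos)
    ultimately obtain d where "0 < d"
      and d: "\<And>y. x < y \<and> y < x + d \<and> y \<le> q \<Longrightarrow> R y - R x \<le> e * (y - x)"
      using right_slope_le_if_deriv_nonpos \<open>0 < e\<close> by metis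
    show "\<exists>d>0. \<forall>y. x < y \<and> y < x + d \<and> y \<le> q \<longrightarrow> W y - W x \<le> e * (y - x)"
    proof (intro exI[of _ d] conjI allI impI)
      fix y assume y: "x < y \<and> y < x + d \<and> y \<le> q"
      have "\<phi>' y - \<phi>' x \<le> c * integral {x..y} \<phi>"
        using weak x y unfolding weak_deriv2_le_def by auto
      then have "W y - W x \<le> R y - R x"
        using \<psi>_nonneg[of y] x y mult_left_mono[of "\<phi>' y - \<phi>' x" "c * integral {x..y} \<phi>" "\<psi> y"]
        by (simp add: W_def R_def algebra_simps)
      with d[OF y] show "W y - W x \<le> e * (y - x)" by simp
    qed (fact \<open>0 < d\<close>)
  qed
  then show ?thesis by (simp add: W_def)
qed

lemma length_less_half_period:
  assumes weak: "weak_deriv2_le {p..q} (- (\<omega>\<^sup>2)) \<phi> \<phi>'" and "0 < \<omega>"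
  shows "q - p < pi / \<omega>"
proof (rule ccontr)
  assume "\<not> q - p < pi / \<omega>"
  define q' where "q' = p + pi / \<omega>"
  have q': "p \<le> q'" "q' \<le> q" "\<omega> * (q' - p) = pi"
    using \<open>\<not> q - p < pi / \<omega>\<close> \<open>0 < \<omega>\<close> by (auto simp: q'_def)
  txt \<open>Compare with the half sine wave vanishing at \<open>p\<close> and \<open>q'\<close>.\<close>
  have "\<phi>' q' * sin (\<omega> * (q' - p)) - \<phi> q' * (\<omega> * cos (\<omega> * (q' - p)))
      \<le> \<phi>' p * sin (\<omega> * (p - p)) - \<phi> p * (\<omega> * cos (\<omega> * (p - p)))"
  proof (rule wronskian_decreasing[where \<psi> = "\<lambda>x. sin (\<omega> * (x - p))"
        and \<psi>' = "\<lambda>x. \<omega> * cos (\<omega> * (x - p))" and \<psi>'' = "\<lambda>x. - (\<omega>\<^sup>2) * sin (\<omega> * (x - p))"])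
    show "weak_deriv2_le {p..q'} (- (\<omega>\<^sup>2)) \<phi> \<phi>'"
      using weak by (rule weak_deriv2_le_subset) (use q' in auto)
    fix x assume x: "x \<in> {p..q'}"
    show "((\<lambda>x. sin (\<omega> * (x - p))) has_real_derivative \<omega> * cos (\<omega> * (x - p))) (at x)"
      by (auto intro!: derivative_eq_intros)
    show "((\<lambda>x. \<omega> * cos (\<omega> * (x - p))) has_real_derivative - (\<omega>\<^sup>2) * sin (\<omega> * (x - p))) (at x)"
      by (auto intro!: derivative_eq_intros simp: power2_eq_square)
    have "\<omega> * (x - p) \<le> \<omega> * (q' - p)" using x \<open>0 < \<omega>\<close> by (intro mult_left_mono) auto
    then show "0 \<le> sin (\<omega> * (x - p))" using x \<open>0 < \<omega>\<close> q' by (intro sin_ge_zero) auto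
  qed (use q' in auto)
  then have "\<phi> q' * \<omega> \<le> - (\<phi> p * \<omega>)" using q' by simp
  with pos[of p] pos[of q'] \<open>0 < \<omega>\<close> show False
    by (smt (verit) mult_pos_pos)
qed

lemma slope_bound_left:
  assumes weak: "weak_deriv2_le {..p} (\<kappa>\<^sup>2) \<phi> \<phi>'" and "0 \<le> \<kappa>" "\<kappa> < \<sigma>"
  shows "\<phi>' p < \<sigma> * \<phi> p"
proof -
  define s where "s = (\<kappa> + \<sigma>) / 2"
  have s: "\<kappa> < s" "s < \<sigma>" "0 < s" using assms by (auto simp: s_def)
  define d where "d = 1 - s / \<sigma>"
  have d: "0 < d" "d < 1" using s by (auto simp: d_def field_simps)
  define a where "a = p + ln d / s"
  have "a \<le> p" using d s by (simp add: a_def divide_nonpos_pos)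
  have exp_a: "exp (s * (a - p)) = d" using d s by (simp add: a_def)
  have "\<phi>' p * (exp (s * (p - p)) - d) - \<phi> p * (s * exp (s * (p - p)))
      \<le> \<phi>' a * (exp (s * (a - p)) - d) - \<phi> a * (s * exp (s * (a - p)))"
  proof (rule wronskian_decreasing[where \<psi> = "\<lambda>x. exp (s * (x - p)) - d"
        and \<psi>' = "\<lambda>x. s * exp (s * (x - p))" and \<psi>'' = "\<lambda>x. s\<^sup>2 * exp (s * (x - p))"])
    show "weak_deriv2_le {a..p} (\<kappa>\<^sup>2) \<phi> \<phi>'"
      using weak by (rule weak_deriv2_le_subset) auto
    fix x assume x: "x \<in> {a..p}"
    show "((\<lambda>x. exp (s * (x - p)) - d) has_real_derivative s * exp (s * (x - p))) (at x)"
      by (auto intro!: derivative_eq_intros)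
    show "((\<lambda>x. s * exp (s * (x - p))) has_real_derivative s\<^sup>2 * exp (s * (x - p))) (at x)"
      by (auto intro!: derivative_eq_intros simp: power2_eq_square)
    have "s * (a - p) \<le> s * (x - p)" using x s by (intro mult_left_mono) auto
    then have "d \<le> exp (s * (x - p))" using exp_a by (metis exp_le_cancel_iff)
    then show "0 \<le> exp (s * (x - p)) - d" by simp
    have "\<kappa>\<^sup>2 \<le> s\<^sup>2" using s \<open>0 \<le> \<kappa>\<close> by (intro power_mono) auto
    with \<open>d \<le> exp (s * (x - p))\<close> d
    show "\<kappa>\<^sup>2 * (exp (s * (x - p)) - d) \<le> s\<^sup>2 * exp (s * (x - p))"
      by (smt (verit) exp_gt_zero mult_left_mono mult_right_mono zero_le_power2)
  qed (fact \<open>a \<le> p\<close>)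
  also have "\<dots> < 0" using exp_a pos[of a] s d by simp
  finally have "\<phi>' p * (s / \<sigma>) < \<phi> p * s" by (simp add: d_def)
  then show ?thesis using s by (simp add: field_simps)
qed

lemma slope_bound_right:
  assumes weak: "weak_deriv2_le {p..} (\<kappa>\<^sup>2) \<phi> \<phi>'" and "0 \<le> \<kappa>" "\<kappa> < \<sigma>"
  shows "- \<sigma> * \<phi> p < \<phi>' p"
proof -
  interpret reflected: positive_C1 "\<lambda>x. \<phi> (- x)" "\<lambda>x. - \<phi>' (- x)" by (rule reflect)
  have "weak_deriv2_le {..-p} (\<kappa>\<^sup>2) (\<lambda>x. \<phi> (- x)) (\<lambda>x. - \<phi>' (- x))"
    using weak_deriv2_le_reflect[OF weak] by simp
  from reflected.slope_bound_left[OF this \<open>0 \<le> \<kappa>\<close> \<open>\<kappa> < \<sigma>\<close>] show ?thesis by simp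
qed

lemma coeff_nonneg_atLeast:
  assumes "weak_deriv2_le {p..} c \<phi> \<phi>'"
  shows "0 \<le> c"
proof (rule ccontr)
  assume "\<not> 0 \<le> c"
  define \<omega> where "\<omega> = sqrt (- c)"
  have "0 < \<omega>" "c = - (\<omega>\<^sup>2)" using \<open>\<not> 0 \<le> c\<close> by (auto simp: \<omega>_def)
  with assms have "weak_deriv2_le {p..p + pi / \<omega>} (- (\<omega>\<^sup>2)) \<phi> \<phi>'"
    by (auto elim!: weak_deriv2_le_subset)
  from length_less_half_period[OF this \<open>0 < \<omega>\<close>] show False by simp
qed

lemma coeff_nonneg_atMost:
  assumes "weak_deriv2_le {..p} c \<phi> \<phi>'"
  shows "0 \<le> c"
proof -
  interpret reflected: positive_C1 "\<lambda>x. \<phi> (- x)" "\<lambda>x. - \<phi>' (- x)" by (rule reflect)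
  show ?thesis
    using weak_deriv2_le_reflect[OF assms] by (intro reflected.coeff_nonneg_atLeast) simp
qed

lemma cos_comparison_unit_interval:
  assumes weak: "weak_deriv2_le {0..1} (- (k\<^sup>2)) \<phi> \<phi>'" and "0 < k"
    and "k - pi / 2 \<le> \<beta>" "\<beta> \<le> pi / 2"
  shows "\<phi>' 1 * cos (k - \<beta>) + \<phi> 1 * (k * sin (k - \<beta>)) \<le> \<phi>' 0 * cos \<beta> - \<phi> 0 * (k * sin \<beta>)"
proof -
  have "\<phi>' 1 * cos (k * 1 - \<beta>) - \<phi> 1 * (- k * sin (k * 1 - \<beta>))
      \<le> \<phi>' 0 * cos (k * 0 - \<beta>) - \<phi> 0 * (- k * sin (k * 0 - \<beta>))"
  proof (rule wronskian_decreasing[where \<psi> = "\<lambda>x. cos (k * x - \<beta>)"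
        and \<psi>' = "\<lambda>x. - k * sin (k * x - \<beta>)" and \<psi>'' = "\<lambda>x. - (k\<^sup>2) * cos (k * x - \<beta>)"])
    fix x :: real assume x: "x \<in> {0..1}"
    show "((\<lambda>x. cos (k * x - \<beta>)) has_real_derivative - k * sin (k * x - \<beta>)) (at x)"
      by (auto intro!: derivative_eq_intros)
    show "((\<lambda>x. - k * sin (k * x - \<beta>)) has_real_derivative - (k\<^sup>2) * cos (k * x - \<beta>)) (at x)"
      by (auto intro!: derivative_eq_intros simp: power2_eq_square)
    have "0 \<le> k * x" "k * x \<le> k" using x \<open>0 < k\<close> by (auto simp: mult_le_cancel_left1)
    then show "0 \<le> cos (k * x - \<beta>)" by (intro cos_ge_zero) (use assms in linarith)+
  qed (use weak in auto)
  then show ?thesis by simp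
qed

lemma three_zone_bound:
  assumes left: "weak_deriv2_le {..0} (\<kappa>1\<^sup>2) \<phi> \<phi>'"
    and middle: "weak_deriv2_le {0..1} (- (k\<^sup>2)) \<phi> \<phi>'"
    and right: "weak_deriv2_le {1..} (\<kappa>3\<^sup>2) \<phi> \<phi>'"
    and "0 \<le> \<kappa>1" "0 \<le> \<kappa>3" "0 < k"
  shows "k \<le> arctan (\<kappa>1 / k) + arctan (\<kappa>3 / k)"
proof (rule ccontr)
  define \<theta>1 \<theta>3 where "\<theta>1 = arctan (\<kappa>1 / k)" and "\<theta>3 = arctan (\<kappa>3 / k)"
  assume "\<not> k \<le> arctan (\<kappa>1 / k) + arctan (\<kappa>3 / k)"
  then have long: "\<theta>1 + \<theta>3 < k" by (simp add: \<theta>1_def \<theta>3_def)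
  have \<theta>: "0 \<le> \<theta>1" "\<theta>1 < pi / 2" "0 \<le> \<theta>3" "\<theta>3 < pi / 2"
    using assms arctan_ubound by (auto simp: \<theta>1_def \<theta>3_def)
  have "1 - 0 < pi / k" using length_less_half_period[OF middle \<open>0 < k\<close>] .
  then have "k < pi" using \<open>0 < k\<close> by (simp add: field_simps)
  txt \<open>Choose \<open>\<beta>\<close> so that \<open>cos (k x - \<beta>)\<close> is positive on \<open>[0, 1]\<close> while its logarithmic
    slopes at \<open>0\<close> and \<open>1\<close> exceed the decay rates \<open>\<kappa>1\<close> and \<open>\<kappa>3\<close> of the outer zones.\<close>
  define \<beta> where "\<beta> = (max \<theta>1 (k - pi / 2) + min (pi / 2) (k - \<theta>3)) / 2"
  have \<beta>: "\<theta>1 < \<beta>" "k - pi / 2 < \<beta>" "\<beta> < pi / 2" "\<beta> < k - \<theta>3"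
    using \<theta> long \<open>k < pi\<close> unfolding \<beta>_def by (auto simp: max_def min_def)
  have cos_pos: "0 < cos \<beta>" "0 < cos (k - \<beta>)"
    using \<beta> \<theta> by (auto intro!: cos_gt_zero_pi)
  have "\<kappa>1 = k * tan \<theta>1" "\<kappa>3 = k * tan \<theta>3"
    using \<open>0 < k\<close> by (simp_all add: \<theta>1_def \<theta>3_def tan_arctan)
  moreover have "tan \<theta>1 < tan \<beta>" "tan \<theta>3 < tan (k - \<beta>)"
    using \<theta> \<beta> by (auto intro!: tan_monotone)
  ultimately have "\<kappa>1 < k * tan \<beta>" "\<kappa>3 < k * tan (k - \<beta>)"
    using \<open>0 < k\<close> by simp_all
  then have "\<phi>' 0 < k * tan \<beta> * \<phi> 0" "- (k * tan (k - \<beta>)) * \<phi> 1 < \<phi>' 1"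
    using slope_bound_left[OF left] slope_bound_right[OF right] assms by auto
  then have "\<phi>' 0 * cos \<beta> - \<phi> 0 * (k * sin \<beta>) < 0"
    and "0 < \<phi>' 1 * cos (k - \<beta>) + \<phi> 1 * (k * sin (k - \<beta>))"
    using cos_pos by (auto simp: tan_def field_simps)
  moreover have "k - pi / 2 \<le> \<beta>" "\<beta> \<le> pi / 2" using \<beta> by linarith+
  ultimately show False using cos_comparison_unit_interval[OF middle \<open>0 < k\<close>] by fastforce
qed

end

section \<open>An explicit three-zone solution\<close>

definition piecewise3 :: "(real \<Rightarrow> real) \<Rightarrow> (real \<Rightarrow> real) \<Rightarrow> (real \<Rightarrow> real) \<Rightarrow> real \<Rightarrow> real" where
  "piecewise3 g1 g2 g3 x = (if x < 0 then g1 x else if x < 1 then g2 x else g3 x)"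

lemma piecewise3_eq_on_pieces:
  assumes "g1 0 = g2 0" "g2 1 = g3 1"
  shows "x \<in> {..0} \<Longrightarrow> piecewise3 g1 g2 g3 x = g1 x"
    and "x \<in> {0..1} \<Longrightarrow> piecewise3 g1 g2 g3 x = g2 x"
    and "x \<in> {1..} \<Longrightarrow> piecewise3 g1 g2 g3 x = g3 x"
  using assms by (auto simp: piecewise3_def)

lemma piecewise3_pieces_cover: "{..0} \<union> {0..1} \<union> {1..} = (UNIV :: real set)"
  by auto

lemma isCont_piecewise3:
  assumes "\<And>x. isCont g1 x" "\<And>x. isCont g2 x" "\<And>x. isCont g3 x" "g1 0 = g2 0" "g2 1 = g3 1"
  shows "isCont (piecewise3 g1 g2 g3) x"
proof -
  note eq = piecewise3_eq_on_pieces[of g1 g2 g3, OF assms(4,5)]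
  have piece: "continuous_on S (piecewise3 g1 g2 g3)"
    if "\<And>x. isCont g x" "\<And>x. x \<in> S \<Longrightarrow> piecewise3 g1 g2 g3 x = g x" for g S
  proof (rule continuous_on_eq)
    show "continuous_on S g" using that(1) by (simp add: continuous_at_imp_continuous_on)
    show "\<And>x. x \<in> S \<Longrightarrow> g x = piecewise3 g1 g2 g3 x" using that(2) by simp
  qed
  have "continuous_on ({..0} \<union> {0..1} \<union> {1..}) (piecewise3 g1 g2 g3)"
    by (intro continuous_on_closed_Un closed_Un closed_atMost closed_atLeastAtMost closed_atLeast
        piece[OF assms(1) eq(1)] piece[OF assms(2) eq(2)] piece[OF assms(3) eq(3)])
  then show ?thesis
    unfolding piecewise3_pieces_cover by (simp add: continuous_on_eq_continuous_at)
qed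

lemma has_real_derivative_within_closed_piece:
  assumes "closed S" and g: "(g has_real_derivative g') (at x)"
    and eq: "\<And>y. y \<in> S \<Longrightarrow> f y = g y" and "x \<in> S \<Longrightarrow> D = g'"
  shows "(f has_real_derivative D) (at x within S)"
proof (cases "x \<in> S")
  case True
  have "(f has_real_derivative g') (at x within S)"
    by (rule has_field_derivative_transform_within[OF has_field_derivative_at_within[OF g]
          zero_less_one True]) (simp add: eq)
  with True assms(4) show ?thesis by simp
next
  case False
  have "closure (S - {x}) \<subseteq> S"
    using closure_mono[of "S - {x}" S] closure_closed[OF \<open>closed S\<close>] by blast
  with False have "at x within S = bot"
    by (auto simp: at_within_eq_bot_iff)
  then show ?thesis by simp
qed

lemma DERIV_piecewise3:
  assumes "\<And>x. (g1 has_real_derivative g1' x) (at x)" "\<And>x. (g2 has_real_derivative g2' x) (at x)"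
    "\<And>x. (g3 has_real_derivative g3' x) (at x)"
    and "g1 0 = g2 0" "g2 1 = g3 1" "x = 0 \<Longrightarrow> g1' 0 = g2' 0" "x = 1 \<Longrightarrow> g2' 1 = g3' 1"
  shows "(piecewise3 g1 g2 g3 has_real_derivative piecewise3 g1' g2' g3' x) (at x)"
proof -
  let ?f = "piecewise3 g1 g2 g3" and ?D = "piecewise3 g1' g2' g3' x"
  have "(?f has_real_derivative ?D) (at x within {..0})"
    by (rule has_real_derivative_within_closed_piece[OF _ assms(1)])
      (use assms(4,6) in \<open>auto simp: piecewise3_def\<close>)
  moreover have "(?f has_real_derivative ?D) (at x within {0..1})"
    by (rule has_real_derivative_within_closed_piece[OF _ assms(2)])
      (use assms(5,7) in \<open>auto simp: piecewise3_def\<close>)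
  moreover have "(?f has_real_derivative ?D) (at x within {1..})"
    by (rule has_real_derivative_within_closed_piece[OF _ assms(3)])
      (auto simp: piecewise3_def)
  ultimately have "(?f has_real_derivative ?D) (at x within {..0} \<union> {0..1} \<union> {1..})"
    by (simp add: has_field_derivative_iff Lim_within_Un)
  then show ?thesis unfolding piecewise3_pieces_cover .
qed

lemma positive_C1_piecewise3:
  assumes "\<And>x. (g1 has_real_derivative h1 x) (at x)" "\<And>x. (g2 has_real_derivative h2 x) (at x)"
    "\<And>x. (g3 has_real_derivative h3 x) (at x)"
    and "\<And>x. isCont h1 x" "\<And>x. isCont h2 x" "\<And>x. isCont h3 x"
    and "g1 0 = g2 0" "g2 1 = g3 1" "h1 0 = h2 0" "h2 1 = h3 1"
    and "\<And>x. x < 0 \<Longrightarrow> 0 < g1 x" "\<And>x. 0 \<le> x \<Longrightarrow> x < 1 \<Longrightarrow> 0 < g2 x"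
    "\<And>x. 1 \<le> x \<Longrightarrow> 0 < g3 x"
  shows "positive_C1 (piecewise3 g1 g2 g3) (piecewise3 h1 h2 h3)"
proof
  fix x :: real
  show "(piecewise3 g1 g2 g3 has_real_derivative piecewise3 h1 h2 h3 x) (at x)"
    using assms(1-3,7-10) by (rule DERIV_piecewise3)
  show "isCont (piecewise3 h1 h2 h3) x"
    using assms(4-6,9,10) by (rule isCont_piecewise3)
  show "0 < piecewise3 g1 g2 g3 x"
    using assms(11-13) by (simp add: piecewise3_def)
qed

lemma cosh_sinh_combination_pos:
  fixes u :: real
  assumes "0 < C" "B \<le> C" "0 \<le> u"
  shows "0 < C * cosh u - B * sinh u"
proof -
  have "C * exp (- u) = C * cosh u - C * sinh u"
    by (simp add: cosh_minus_sinh[symmetric] algebra_simps)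
  also have "\<dots> \<le> C * cosh u - B * sinh u"
    using assms by (intro diff_left_mono mult_right_mono) auto
  finally show ?thesis using \<open>0 < C\<close> by (smt (verit) exp_gt_zero mult_pos_pos)
qed

lemma DERIV_piecewise3_ode:
  assumes "\<And>x. (h1 has_real_derivative a * g1 x) (at x)" "\<And>x. (h2 has_real_derivative b * g2 x) (at x)"
    "\<And>x. (h3 has_real_derivative c * g3 x) (at x)"
    and "h1 0 = h2 0" "h2 1 = h3 1" "x \<noteq> 0" "x \<noteq> 1"
  shows "(piecewise3 h1 h2 h3 has_real_derivative mfun a b c x * piecewise3 g1 g2 g3 x) (at x)"
proof -
  have "(piecewise3 h1 h2 h3 has_real_derivative
      piecewise3 (\<lambda>x. a * g1 x) (\<lambda>x. b * g2 x) (\<lambda>x. c * g3 x) x) (at x)"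
    using assms by (intro DERIV_piecewise3) simp_all
  moreover have "piecewise3 (\<lambda>x. a * g1 x) (\<lambda>x. b * g2 x) (\<lambda>x. c * g3 x) x
      = mfun a b c x * piecewise3 g1 g2 g3 x"
    by (simp add: piecewise3_def mfun_def)
  ultimately show ?thesis by simp
qed

lemma three_zone_phase:
  assumes "0 < \<kappa>1" "0 < \<kappa>3" "0 < k" "k \<le> arctan (\<kappa>1 / k) + arctan (\<kappa>3 / k)"
  defines "\<theta>1 \<equiv> arctan (\<kappa>1 / k)"
  shows "\<And>x. 0 \<le> x \<Longrightarrow> x \<le> 1 \<Longrightarrow> 0 < cos (k * x - \<theta>1)"
    and "k * sin (k - \<theta>1) / \<kappa>3 \<le> cos (k - \<theta>1)"
proof -
  define \<theta>3 where "\<theta>3 = arctan (\<kappa>3 / k)"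
  have \<theta>: "0 < \<theta>1" "\<theta>1 < pi / 2" "0 < \<theta>3" "\<theta>3 < pi / 2" "k - \<theta>1 \<le> \<theta>3"
    using assms arctan_ubound by (auto simp: \<theta>1_def \<theta>3_def)
  show cos_pos: "0 < cos (k * x - \<theta>1)" if "0 \<le> x" "x \<le> 1" for x
  proof -
    have "0 \<le> k * x" "k * x \<le> k" using that \<open>0 < k\<close> by (auto simp: mult_le_cancel_left1)
    then show ?thesis by (intro cos_gt_zero_pi) (use \<theta> in linarith)+
  qed
  have "tan (k - \<theta>1) \<le> tan \<theta>3"
    using \<theta> \<open>0 < k\<close> tan_monotone[of "k - \<theta>1" \<theta>3] by (cases "k - \<theta>1 = \<theta>3") auto
  also have "tan \<theta>3 = \<kappa>3 / k" by (simp add: \<theta>3_def tan_arctan)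
  finally show "k * sin (k - \<theta>1) / \<kappa>3 \<le> cos (k - \<theta>1)"
    using cos_pos[of 1] \<open>0 < k\<close> \<open>0 < \<kappa>3\<close> by (simp add: tan_def field_simps)
qed

lemma three_zone_solution:
  assumes "0 < \<kappa>1" "0 < \<kappa>3" "0 < k" "k \<le> arctan (\<kappa>1 / k) + arctan (\<kappa>3 / k)"
  obtains \<phi> \<phi>' where "positive_C1 \<phi> \<phi>'"
    and "\<And>x. x \<noteq> 0 \<Longrightarrow> x \<noteq> 1 \<Longrightarrow>
           (\<phi>' has_real_derivative mfun (\<kappa>1\<^sup>2) (- (k\<^sup>2)) (\<kappa>3\<^sup>2) x * \<phi> x) (at x)"
proof -
  define \<theta>1 C S where "\<theta>1 = arctan (\<kappa>1 / k)" and "C = cos (k - \<theta>1)" and "S = sin (k - \<theta>1)"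
  note phase = three_zone_phase[OF assms, folded \<theta>1_def]
  txt \<open>An exponential on the left, a cosine in the middle (matched to it at \<open>0\<close> by the choice
    of the phase \<open>\<theta>1\<close>) and its \<open>C\<^sup>1\<close> continuation by \<open>cosh\<close> and \<open>sinh\<close> on the right, which
    stays positive because \<open>k tan (k - \<theta>1) \<le> \<kappa>3\<close>.\<close>
  define g1 g2 g3 where "g1 y = cos \<theta>1 * exp (\<kappa>1 * y)" and "g2 y = cos (k * y - \<theta>1)"
    and "g3 y = C * cosh (\<kappa>3 * (y - 1)) - k * S / \<kappa>3 * sinh (\<kappa>3 * (y - 1))" for y
  define h1 h2 h3 where "h1 y = \<kappa>1 * cos \<theta>1 * exp (\<kappa>1 * y)" and "h2 y = - k * sin (k * y - \<theta>1)"
    and "h3 y = \<kappa>3 * C * sinh (\<kappa>3 * (y - 1)) - k * S * cosh (\<kappa>3 * (y - 1))" for y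
  have dg: "(g1 has_real_derivative h1 x) (at x)" "(g2 has_real_derivative h2 x) (at x)"
    "(g3 has_real_derivative h3 x) (at x)" for x
    unfolding g1_def g2_def g3_def h1_def h2_def h3_def using \<open>0 < \<kappa>3\<close>
    by (auto intro!: derivative_eq_intros)
  have dh: "(h1 has_real_derivative \<kappa>1\<^sup>2 * g1 x) (at x)" "(h2 has_real_derivative - (k\<^sup>2) * g2 x) (at x)"
    "(h3 has_real_derivative \<kappa>3\<^sup>2 * g3 x) (at x)" for x
    unfolding g1_def g2_def g3_def h1_def h2_def h3_def using \<open>0 < \<kappa>3\<close>
    by (auto intro!: derivative_eq_intros simp: power2_eq_square algebra_simps)
  have junctions: "g1 0 = g2 0" "g2 1 = g3 1" "h1 0 = h2 0" "h2 1 = h3 1"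
    using \<open>0 < k\<close> by (simp_all add: g1_def g2_def g3_def h1_def h2_def h3_def C_def S_def \<theta>1_def
        cos_arctan sin_arctan field_simps)
  have "0 < g1 x" for x
    using phase(1)[of 0] by (simp add: g1_def)
  moreover have "0 < g2 x" if "0 \<le> x" "x < 1" for x
    using phase(1)[of x] that by (simp add: g2_def)
  moreover have "0 < g3 x" if "1 \<le> x" for x
    unfolding g3_def using phase(1)[of 1] phase(2) that \<open>0 < \<kappa>3\<close>
    by (intro cosh_sinh_combination_pos) (auto simp: C_def S_def)
  ultimately have "positive_C1 (piecewise3 g1 g2 g3) (piecewise3 h1 h2 h3)"
    by (intro positive_C1_piecewise3[OF dg dh[THEN DERIV_isCont] junctions])
  moreover have "(piecewise3 h1 h2 h3 has_real_derivative
      mfun (\<kappa>1\<^sup>2) (- (k\<^sup>2)) (\<kappa>3\<^sup>2) x * piecewise3 g1 g2 g3 x) (at x)" if "x \<noteq> 0" "x \<noteq> 1" for x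
    using DERIV_piecewise3_ode[OF dh junctions(3,4) that] .
  ultimately show ?thesis by (rule that)
qed

section \<open>Supersolutions of the eigenvalue problem\<close>

lemma interval_integral_diff_eq_integral:
  fixes f :: "real \<Rightarrow> real"
  assumes int: "\<And>a b. set_integrable lborel {a..b} f" and "x \<le> y"
  shows "(LBINT t=0..y. f t) - (LBINT t=0..x. f t) = integral {x..y} f"
proof -
  have "interval_lebesgue_integrable lborel (ereal a) (ereal b) f" if "a \<le> b" for a b
    using that by (auto simp: interval_lebesgue_integrable_def intro!: set_integrable_subset[OF int[of a b]])
  moreover have "ereal (min 0 (min x y)) = min 0 (min (ereal x) (ereal y))"
    "ereal (max 0 (max x y)) = max 0 (max (ereal x) (ereal y))"
    by (simp_all add: min_def max_def zero_ereal_def)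
  ultimately have "(LBINT t=0..x. f t) + (LBINT t=x..y. f t) = (LBINT t=0..y. f t)"
    by (intro interval_integral_sum) (metis min.cobounded1 max.cobounded1 order.trans)
  moreover have "(LBINT t=x..y. f t) = integral {x..y} f"
    by (rule interval_integral_eq_integral[OF \<open>x \<le> y\<close> int])
  ultimately show ?thesis by simp
qed

lemma isCont_if_diff_eq_integral:
  fixes g f :: "real \<Rightarrow> real"
  assumes diff: "\<And>x y. x \<le> y \<Longrightarrow> g y - g x = integral {x..y} f"
    and int: "\<And>a b. f integrable_on {a..b}"
  shows "isCont g z"
proof -
  have "continuous_on {z - 1..z + 1} (\<lambda>y. g (z - 1) + integral {z - 1..y} f)"
    by (intro continuous_intros indefinite_integral_continuous_1 int)
  then have "continuous_on {z - 1..z + 1} g"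
    by (rule continuous_on_eq) (use diff in force)
  then show ?thesis
    by (rule continuous_on_interior) (simp add: interior_atLeastAtMost_real)
qed

lemma weak_deriv2_le_of_AE:
  fixes \<phi> \<phi>' \<phi>'' :: "real \<Rightarrow> real"
  assumes diff: "\<And>x y. x \<le> y \<Longrightarrow> \<phi>' y - \<phi>' x = integral {x..y} \<phi>''"
    and int: "\<And>a b. set_integrable lborel {a..b} \<phi>''"
    and cont: "continuous_on UNIV \<phi>"
    and ae: "AE t in lborel. t \<in> I \<longrightarrow> \<phi>'' t \<le> c * \<phi> t"
  shows "weak_deriv2_le I c \<phi> \<phi>'"
  unfolding weak_deriv2_le_def
proof (intro allI impI)
  fix x y :: real assume "x \<le> y" "{x..y} \<subseteq> I"
  have int_c\<phi>: "set_integrable lborel {x..y} (\<lambda>t. c * \<phi> t)"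
    by (intro borel_integrable_atLeastAtMost' continuous_intros continuous_on_subset[OF cont]) auto
  have "\<phi>' y - \<phi>' x = (LINT t:{x..y}|lborel. \<phi>'' t)"
    using diff[OF \<open>x \<le> y\<close>] set_borel_integral_eq_integral(2)[OF int] by simp
  also have "\<dots> \<le> (LINT t:{x..y}|lborel. c * \<phi> t)"
  proof (rule set_integral_mono_AE[OF int int_c\<phi>])
    show "AE t\<in>{x..y} in lborel. \<phi>'' t \<le> c * \<phi> t"
      using ae by eventually_elim (use \<open>{x..y} \<subseteq> I\<close> in auto)
  qed
  also have "\<dots> = c * integral {x..y} \<phi>"
    using set_borel_integral_eq_integral(2)[OF int_c\<phi>] by simp
  finally show "\<phi>' y - \<phi>' x \<le> c * integral {x..y} \<phi>" .
qed

lemma mfun_measurable [measurable]: "mfun r1 r2 r3 \<in> borel_measurable borel"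
  unfolding mfun_def[abs_def] by measurable

lemma AE_zone_le:
  assumes ae: "AE y in lborel. \<phi>'' y / L\<^sup>2 + (mfun r1 r2 r3 y + lam) * \<phi> y \<le> 0" and "0 < L"
    and zone: "\<And>t. t \<in> I \<Longrightarrow> t \<noteq> 0 \<Longrightarrow> t \<noteq> 1 \<Longrightarrow> mfun r1 r2 r3 t = r"
  shows "AE t in lborel. t \<in> I \<longrightarrow> \<phi>'' t \<le> - (L\<^sup>2 * (r + lam)) * \<phi> t"
  using ae AE_lborel_singleton[of 0] AE_lborel_singleton[of 1]
proof eventually_elim
  case (elim t)
  show ?case
  proof
    assume "t \<in> I"
    with elim zone have "\<phi>'' t / L\<^sup>2 \<le> - ((r + lam) * \<phi> t)" by simp
    with \<open>0 < L\<close> have "\<phi>'' t \<le> - ((r + lam) * \<phi> t) * L\<^sup>2"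
      by (simp add: pos_divide_le_eq)
    then show "\<phi>'' t \<le> - (L\<^sup>2 * (r + lam)) * \<phi> t" by (simp add: algebra_simps)
  qed
qed

lemma supersol_imp_weak:
  assumes "supersol r1 r2 r3 L lam \<phi>" "0 < L"
  obtains \<phi>' where "positive_C1 \<phi> \<phi>'"
    and "weak_deriv2_le {..0} (- (L\<^sup>2 * (r1 + lam))) \<phi> \<phi>'"
    and "weak_deriv2_le {0..1} (- (L\<^sup>2 * (r2 + lam))) \<phi> \<phi>'"
    and "weak_deriv2_le {1..} (- (L\<^sup>2 * (r3 + lam))) \<phi> \<phi>'"
proof -
  obtain \<phi>' \<phi>'' where
    deriv: "\<And>x. (\<phi> has_real_derivative \<phi>' x) (at x)" and
    int: "\<And>a b. set_integrable lborel {a..b} \<phi>''" and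
    ftc: "\<And>x. \<phi>' x = \<phi>' 0 + (LBINT t=0..x. \<phi>'' t)" and
    pos: "\<And>x. 0 < \<phi> x" and
    ae: "AE y in lborel. \<phi>'' y / L\<^sup>2 + (mfun r1 r2 r3 y + lam) * \<phi> y \<le> 0"
    using assms(1) unfolding supersol_def by blast
  have diff: "\<phi>' y - \<phi>' x = integral {x..y} \<phi>''" if "x \<le> y" for x y
    using interval_integral_diff_eq_integral[OF int that] ftc[of x] ftc[of y] by simp
  have "positive_C1 \<phi> \<phi>'"
  proof
    show "isCont \<phi>' x" for x
      using diff set_borel_integral_eq_integral(1)[OF int] by (rule isCont_if_diff_eq_integral)
  qed (use deriv pos in auto)
  have "continuous_on UNIV \<phi>"
    using deriv by (intro continuous_at_imp_continuous_on ballI DERIV_isCont) blast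
  then have zone: "weak_deriv2_le I (- (L\<^sup>2 * (r + lam))) \<phi> \<phi>'"
    if "\<And>t. t \<in> I \<Longrightarrow> t \<noteq> 0 \<Longrightarrow> t \<noteq> 1 \<Longrightarrow> mfun r1 r2 r3 t = r" for I r
    by (intro weak_deriv2_le_of_AE[OF diff int] AE_zone_le[OF ae \<open>0 < L\<close> that])
  show ?thesis
    by (rule that[OF \<open>positive_C1 \<phi> \<phi>'\<close>]; rule zone; auto simp: mfun_def)
qed

lemma set_integrable_mfun_mult:
  assumes cont: "continuous_on UNIV \<phi>"
  shows "set_integrable lborel {a..b} (\<lambda>x. c * (\<mu> - mfun r1 r2 r3 x) * \<phi> x)"
proof -
  define B where "B = \<bar>c\<bar> * (\<bar>\<mu>\<bar> + \<bar>r1\<bar> + \<bar>r2\<bar> + \<bar>r3\<bar>)"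
  have bound: "norm (c * (\<mu> - mfun r1 r2 r3 x) * \<phi> x) \<le> norm (B * \<bar>\<phi> x\<bar>)" for x
  proof -
    have "\<bar>\<mu> - mfun r1 r2 r3 x\<bar> \<le> \<bar>\<mu>\<bar> + \<bar>r1\<bar> + \<bar>r2\<bar> + \<bar>r3\<bar>"
      by (auto simp: mfun_def)
    then have "\<bar>c\<bar> * \<bar>\<mu> - mfun r1 r2 r3 x\<bar> * \<bar>\<phi> x\<bar> \<le> B * \<bar>\<phi> x\<bar>"
      unfolding B_def by (intro mult_right_mono mult_left_mono) auto
    then show ?thesis by (simp add: abs_mult B_def)
  qed
  have "\<phi> \<in> borel_measurable borel" by (rule borel_measurable_continuous_onI[OF cont])
  then have meas: "set_borel_measurable lborel {a..b} (\<lambda>x. c * (\<mu> - mfun r1 r2 r3 x) * \<phi> x)"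
    unfolding set_borel_measurable_def by measurable
  have int: "set_integrable lborel {a..b} (\<lambda>x. B * \<bar>\<phi> x\<bar>)"
    by (intro borel_integrable_atLeastAtMost' continuous_intros continuous_on_subset[OF cont]) auto
  show ?thesis
    by (rule set_integrable_bound[OF int meas], rule AE_I2) (use bound in blast)
qed

lemma eq_add_interval_integral_from_0:
  fixes g f :: "real \<Rightarrow> real"
  assumes ftc: "\<And>a b. a \<le> b \<Longrightarrow> g b - g a = (LBINT t=a..b. f t)"
  shows "g x = g 0 + (LBINT t=0..x. f t)"
proof (cases "0 \<le> x")
  case True
  with ftc[OF True] show ?thesis by (simp add: zero_ereal_def)
next
  case False
  with ftc[of x 0] show ?thesis
    by (simp add: zero_ereal_def interval_integral_endpoints_reverse[of "ereal 0"])
qed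

lemma supersolI:
  assumes "positive_C1 \<phi> \<phi>'" "0 < L"
    and ode: "\<And>x. x \<noteq> 0 \<Longrightarrow> x \<noteq> 1 \<Longrightarrow>
           (\<phi>' has_real_derivative L\<^sup>2 * (\<mu> - mfun r1 r2 r3 x) * \<phi> x) (at x)"
  shows "supersol r1 r2 r3 L (- \<mu>) \<phi>"
proof -
  interpret positive_C1 \<phi> \<phi>' by fact
  define \<phi>'' where "\<phi>'' x = L\<^sup>2 * (\<mu> - mfun r1 r2 r3 x) * \<phi> x" for x
  have "continuous_on UNIV \<phi>"
    using has_deriv by (intro continuous_at_imp_continuous_on ballI DERIV_isCont) blast
  then have int: "set_integrable lborel {a..b} \<phi>''" for a b
    unfolding \<phi>''_def by (rule set_integrable_mfun_mult)
  have "\<phi>' b - \<phi>' a = (LBINT t=a..b. \<phi>'' t)" if "a \<le> b" for a b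
  proof -
    have "(\<phi>'' has_integral \<phi>' b - \<phi>' a) {a..b}"
      using that ode isCont_deriv
      by (intro fundamental_theorem_of_calculus_interior_strong[where S = "{0, 1}"]
          continuous_at_imp_continuous_on)
        (auto simp: \<phi>''_def has_real_derivative_iff_has_vector_derivative[symmetric])
    then show ?thesis
      using interval_integral_eq_integral[OF that int] by (simp add: integral_unique)
  qed
  then have "\<phi>' x = \<phi>' 0 + (LBINT t=0..x. \<phi>'' t)" for x
    by (rule eq_add_interval_integral_from_0)
  moreover have "AE y in lborel. \<phi>'' y / L\<^sup>2 + (mfun r1 r2 r3 y + - \<mu>) * \<phi> y \<le> 0"
  proof (rule AE_I2)
    fix y
    have "\<phi>'' y / L\<^sup>2 = (\<mu> - mfun r1 r2 r3 y) * \<phi> y" using \<open>0 < L\<close> by (simp add: \<phi>''_def)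
    then show "\<phi>'' y / L\<^sup>2 + (mfun r1 r2 r3 y + - \<mu>) * \<phi> y \<le> 0" by (simp add: algebra_simps)
  qed
  ultimately show ?thesis
    unfolding supersol_def using has_deriv int pos by blast
qed

text \<open>Matching \<open>exp (\<kappa>\<^sub>i x)\<close>, \<open>\<kappa>\<^sub>i = L \<surd>(\<mu> - r\<^sub>i)\<close>, on the outer zones with \<open>cos (k x - \<theta>\<^sub>1)\<close>,
  \<open>k = L \<surd>(r2 - \<mu>)\<close>, on \<open>[0, 1]\<close> in a \<open>C\<^sup>1\<close> way forces \<open>k = \<theta>\<^sub>1 + \<theta>\<^sub>3\<close> with
  \<open>tan \<theta>\<^sub>i = \<kappa>\<^sub>i / k\<close>; \<open>Lcrit \<mu>\<close> is the length solving this, so that \<open>\<lambda>\<^sub>1 (Lcrit \<mu>) = - \<mu>\<close>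
  for \<open>max r1 r3 < \<mu> < r2\<close>.\<close>
definition Lcrit :: "real \<Rightarrow> real \<Rightarrow> real \<Rightarrow> real \<Rightarrow> real" where
  "Lcrit r1 r2 r3 \<mu> =
     (arctan (sqrt ((\<mu> - r1) / (r2 - \<mu>))) + arctan (sqrt ((\<mu> - r3) / (r2 - \<mu>)))) / sqrt (r2 - \<mu>)"

lemma arctan_sum_eq_Lcrit:
  assumes "0 < L" "\<mu> < r2"
  shows "arctan (L * sqrt (\<mu> - r1) / (L * sqrt (r2 - \<mu>))) + arctan (L * sqrt (\<mu> - r3) / (L * sqrt (r2 - \<mu>)))
    = sqrt (r2 - \<mu>) * Lcrit r1 r2 r3 \<mu>"
  using assms by (simp add: Lcrit_def real_sqrt_divide)

lemma supersol_le_neg_max: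
  assumes "supersol r1 r2 r3 L lam \<phi>" "0 < L"
  shows "lam \<le> - max r1 r3"
proof -
  obtain \<phi>' where "positive_C1 \<phi> \<phi>'"
    and left: "weak_deriv2_le {..0} (- (L\<^sup>2 * (r1 + lam))) \<phi> \<phi>'"
    and right: "weak_deriv2_le {1..} (- (L\<^sup>2 * (r3 + lam))) \<phi> \<phi>'"
    using supersol_imp_weak[OF assms] by metis
  interpret positive_C1 \<phi> \<phi>' by fact
  have "0 \<le> - (L\<^sup>2 * (r1 + lam))" "0 \<le> - (L\<^sup>2 * (r3 + lam))"
    using coeff_nonneg_atMost[OF left] coeff_nonneg_atLeast[OF right] .
  with \<open>0 < L\<close> show ?thesis by (simp add: mult_le_0_iff)
qed

lemma supersol_le_Lcrit:
  assumes "supersol r1 r2 r3 L (- \<mu>) \<phi>" "0 < L" "max r1 r3 \<le> \<mu>" "\<mu> < r2"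
  shows "L \<le> Lcrit r1 r2 r3 \<mu>"
proof -
  obtain \<phi>' where "positive_C1 \<phi> \<phi>'"
    and zones: "weak_deriv2_le {..0} (- (L\<^sup>2 * (r1 + - \<mu>))) \<phi> \<phi>'"
      "weak_deriv2_le {0..1} (- (L\<^sup>2 * (r2 + - \<mu>))) \<phi> \<phi>'"
      "weak_deriv2_le {1..} (- (L\<^sup>2 * (r3 + - \<mu>))) \<phi> \<phi>'"
    using supersol_imp_weak[OF assms(1,2)] by metis
  interpret positive_C1 \<phi> \<phi>' by fact
  define \<kappa>1 k \<kappa>3 where "\<kappa>1 = L * sqrt (\<mu> - r1)" and "k = L * sqrt (r2 - \<mu>)"
    and "\<kappa>3 = L * sqrt (\<mu> - r3)"
  have "- (L\<^sup>2 * (r1 + - \<mu>)) = \<kappa>1\<^sup>2" "- (L\<^sup>2 * (r2 + - \<mu>)) = - (k\<^sup>2)"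
    "- (L\<^sup>2 * (r3 + - \<mu>)) = \<kappa>3\<^sup>2"
    using assms(3,4) by (simp_all add: \<kappa>1_def k_def \<kappa>3_def power_mult_distrib algebra_simps)
  with zones have "k \<le> arctan (\<kappa>1 / k) + arctan (\<kappa>3 / k)"
    using assms by (intro three_zone_bound) (simp_all add: \<kappa>1_def k_def \<kappa>3_def)
  also have "\<dots> = sqrt (r2 - \<mu>) * Lcrit r1 r2 r3 \<mu>"
    unfolding \<kappa>1_def k_def \<kappa>3_def using assms by (intro arctan_sum_eq_Lcrit)
  finally show ?thesis using assms(4) by (simp add: k_def mult.commute)
qed

lemma supersol_of_le_Lcrit:
  assumes "0 < L" "max r1 r3 < \<mu>" "\<mu> < r2" "L \<le> Lcrit r1 r2 r3 \<mu>"
  shows "\<exists>\<phi>. supersol r1 r2 r3 L (- \<mu>) \<phi>"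
proof -
  define \<kappa>1 k \<kappa>3 where "\<kappa>1 = L * sqrt (\<mu> - r1)" and "k = L * sqrt (r2 - \<mu>)"
    and "\<kappa>3 = L * sqrt (\<mu> - r3)"
  have "k \<le> sqrt (r2 - \<mu>) * Lcrit r1 r2 r3 \<mu>"
    using assms by (simp add: k_def mult.commute)
  also have "\<dots> = arctan (\<kappa>1 / k) + arctan (\<kappa>3 / k)"
    unfolding \<kappa>1_def k_def \<kappa>3_def using assms by (intro arctan_sum_eq_Lcrit[symmetric])
  finally obtain \<phi> \<phi>' where "positive_C1 \<phi> \<phi>'"
    and ode: "\<And>x. x \<noteq> 0 \<Longrightarrow> x \<noteq> 1 \<Longrightarrow>
      (\<phi>' has_real_derivative mfun (\<kappa>1\<^sup>2) (- (k\<^sup>2)) (\<kappa>3\<^sup>2) x * \<phi> x) (at x)"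
    using three_zone_solution[of \<kappa>1 \<kappa>3 k] assms by (auto simp: \<kappa>1_def k_def \<kappa>3_def)
  have "mfun (\<kappa>1\<^sup>2) (- (k\<^sup>2)) (\<kappa>3\<^sup>2) x = L\<^sup>2 * (\<mu> - mfun r1 r2 r3 x)" for x
    using assms by (simp add: mfun_def \<kappa>1_def k_def \<kappa>3_def power_mult_distrib algebra_simps)
  with ode have "supersol r1 r2 r3 L (- \<mu>) \<phi>"
    by (intro supersolI[OF \<open>positive_C1 \<phi> \<phi>'\<close> \<open>0 < L\<close>]) simp
  then show ?thesis by blast
qed

section \<open>The critical length and the principal eigenvalue\<close>

lemma arccot_eq_arctan_inverse:
  fixes x :: real
  assumes "0 < x"
  shows "arccot x = arctan (inverse x)"
  unfolding arccot_def
proof (rule the_equality)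
  let ?z = "arctan (inverse x)"
  have z: "0 < ?z" "?z < pi / 2" using assms arctan_ubound by auto
  then have "?z < pi" by linarith
  with z have "0 < sin ?z" by (intro sin_gt_zero)
  have "tan ?z = inverse x" by (rule tan_arctan)
  with \<open>0 < sin ?z\<close> have "cot ?z = x" by (simp add: cot_def tan_def field_simps)
  with z \<open>?z < pi\<close> show "0 < ?z \<and> ?z < pi \<and> cot ?z = x" by simp
  fix y assume y: "0 < y \<and> y < pi \<and> cot y = x"
  have "0 < sin y" using y by (intro sin_gt_zero) auto
  with y \<open>cot ?z = x\<close> \<open>0 < sin ?z\<close> have "cos y * sin ?z = cos ?z * sin y"
    by (simp add: cot_def field_simps)
  then have "sin (?z - y) = 0" by (simp add: sin_diff mult.commute)
  moreover have "- pi < ?z - y" "?z - y < pi" using y z by linarith+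
  ultimately show "y = ?z" using sin_eq_0_pi by fastforce
qed

lemma isCont_if_le_iff:
  fixes f g :: "real \<Rightarrow> real"
  assumes bounds: "\<And>L. a \<le> g L" "\<And>L. g L < b"
    and mono: "strict_mono_on {a..<b} f"
    and adj: "\<And>L m. a \<le> m \<Longrightarrow> m < b \<Longrightarrow> g L \<le> m \<longleftrightarrow> L \<le> f m"
  shows "isCont g L0"
  unfolding isCont_def
proof (rule order_tendstoI)
  fix m assume "m < g L0"
  show "\<forall>\<^sub>F L in at L0. m < g L"
  proof (cases "a \<le> m")
    case True
    with \<open>m < g L0\<close> bounds(2) have "f m < L0"
      using adj[of m L0] by (meson not_le order.strict_trans)
    then have "\<forall>\<^sub>F L in at L0. f m < L" by (rule order_tendstoD[OF tendsto_ident_at])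
    then show ?thesis
      by eventually_elim (use True \<open>m < g L0\<close> bounds(2) adj in \<open>meson not_le order.strict_trans\<close>)
  next
    case False
    then show ?thesis
      using bounds(1) by (intro always_eventually allI) (meson not_le less_le_trans)
  qed
next
  fix m assume "g L0 < m"
  show "\<forall>\<^sub>F L in at L0. g L < m"
  proof (cases "m \<le> b")
    case True
    define m' where "m' = (g L0 + m) / 2"
    have m': "g L0 < m'" "m' < m" "a \<le> m'" "m' < b"
      using \<open>g L0 < m\<close> True bounds[of L0] by (auto simp: m'_def)
    have "L0 \<le> f (g L0)" using adj[of "g L0" L0] bounds[of L0] by simp
    also have "f (g L0) < f m'"
      using m' bounds[of L0] by (intro strict_mono_onD[OF mono]) auto
    finally have "\<forall>\<^sub>F L in at L0. L < f m'" by (rule order_tendstoD[OF tendsto_ident_at])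
    then show ?thesis
      by eventually_elim (use m' adj in \<open>meson le_less_trans less_imp_le\<close>)
  next
    case False
    then show ?thesis
      using bounds(2) by (intro always_eventually allI) (meson not_le order.strict_trans)
  qed
qed

definition mu1 :: "real \<Rightarrow> real \<Rightarrow> real \<Rightarrow> real \<Rightarrow> real" where
  "mu1 r1 r2 r3 L = (if L \<le> Lunder r1 r2 r3 then max r1 r3
     else THE \<mu>. max r1 r3 < \<mu> \<and> \<mu> < r2 \<and> Lcrit r1 r2 r3 \<mu> = L)"

context
  fixes r1 r2 r3 :: real
  assumes rates: "max r1 r3 < r2"
begin

lemma Lcrit_max_eq_Lunder: "Lcrit r1 r2 r3 (max r1 r3) = Lunder r1 r2 r3"
proof (cases "r1 = r3")
  case False
  define M where "M = max r1 r3"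
  have "0 < r2 - M" "0 < \<bar>r1 - r3\<bar>" using rates False by (auto simp: M_def)
  have "arctan (sqrt ((M - r1) / (r2 - M))) + arctan (sqrt ((M - r3) / (r2 - M)))
      = arctan (sqrt (\<bar>r1 - r3\<bar> / (r2 - M)))"
    by (cases "r1 \<le> r3") (auto simp: M_def)
  also have "\<dots> = arccot (sqrt ((r2 - M) / \<bar>r1 - r3\<bar>))"
    using \<open>0 < r2 - M\<close> \<open>0 < \<bar>r1 - r3\<bar>\<close>
    by (simp add: arccot_eq_arctan_inverse real_sqrt_divide)
  finally show ?thesis using False by (simp add: Lcrit_def Lunder_def M_def)
qed (simp add: Lcrit_def Lunder_def)

lemma Lunder_nonneg: "0 \<le> Lunder r1 r2 r3"
  using rates by (simp add: Lcrit_max_eq_Lunder[symmetric] Lcrit_def)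

lemma Lcrit_strict_mono: "strict_mono_on {max r1 r3..<r2} (Lcrit r1 r2 r3)"
proof (rule strict_mono_onI)
  fix m1 m2 assume m: "m1 \<in> {max r1 r3..<r2}" "m2 \<in> {max r1 r3..<r2}" "m1 < m2"
  define N where "N m = arctan (sqrt ((m - r1) / (r2 - m))) + arctan (sqrt ((m - r3) / (r2 - m)))"
    for m
  have ratio: "(m1 - r) / (r2 - m1) < (m2 - r) / (r2 - m2)" if "r < r2" for r
  proof -
    have "(m1 - r) / (r2 - m1) = (r2 - r) / (r2 - m1) - 1" "(m2 - r) / (r2 - m2) = (r2 - r) / (r2 - m2) - 1"
      using m by (auto simp: field_simps)
    moreover have "(r2 - r) / (r2 - m1) < (r2 - r) / (r2 - m2)"
      using m that by (intro divide_strict_left_mono) auto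
    ultimately show ?thesis by simp
  qed
  have "arctan (sqrt ((m1 - r) / (r2 - m1))) < arctan (sqrt ((m2 - r) / (r2 - m2)))"
    if "r < r2" for r
    using ratio[OF that] by (simp add: arctan_less_iff real_sqrt_less_iff)
  then have "N m1 < N m2"
    using rates unfolding N_def by (intro add_strict_mono) auto
  moreover have "0 \<le> N m1" using m by (simp add: N_def)
  ultimately have "N m1 / sqrt (r2 - m1) < N m2 / sqrt (r2 - m2)"
    using m by (intro frac_less) auto
  then show "Lcrit r1 r2 r3 m1 < Lcrit r1 r2 r3 m2" by (simp add: Lcrit_def N_def)
qed

lemma Lcrit_continuous: "continuous_on {..<r2} (Lcrit r1 r2 r3)"
  unfolding Lcrit_def[abs_def] by (intro continuous_intros) auto

lemma Lcrit_tendsto_top: "filterlim (Lcrit r1 r2 r3) at_top (at_left r2)"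
  unfolding Lcrit_def[abs_def] using rates by real_asymp

lemma Lcrit_balanced_rate:
  defines "D \<equiv> 2 * r2 - r1 - r3"
  defines "m \<equiv> (r2\<^sup>2 - r1 * r3) / D"
  shows "max r1 r3 < m" "m < r2"
    and "Lcrit r1 r2 r3 m = pi / 2 * sqrt (D / ((r2 - r1) * (r2 - r3)))"
proof -
  have r: "0 < r2 - r1" "0 < r2 - r3" using rates by auto
  then have "0 < D" by (simp add: D_def)
  have m: "m - r1 = (r2 - r1)\<^sup>2 / D" "m - r3 = (r2 - r3)\<^sup>2 / D" "r2 - m = (r2 - r1) * (r2 - r3) / D"
    using \<open>0 < D\<close> by (simp_all add: m_def D_def field_simps power2_eq_square)
  moreover have "0 < (r2 - r1)\<^sup>2 / D" "0 < (r2 - r3)\<^sup>2 / D" "0 < (r2 - r1) * (r2 - r3) / D"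
    using r \<open>0 < D\<close> by simp_all
  ultimately show "max r1 r3 < m" "m < r2" by auto
  define x where "x = sqrt ((r2 - r1) / (r2 - r3))"
  have "0 < x" using r by (simp add: x_def)
  have "(m - r1) / (r2 - m) = (r2 - r1) / (r2 - r3)" "(m - r3) / (r2 - m) = (r2 - r3) / (r2 - r1)"
    unfolding m using r \<open>0 < D\<close> by (simp_all add: power2_eq_square)
  then have "sqrt ((m - r1) / (r2 - m)) = x" "sqrt ((m - r3) / (r2 - m)) = inverse x"
    by (simp_all add: x_def real_sqrt_divide)
  then have "Lcrit r1 r2 r3 m = (arctan x + arctan (inverse x)) / sqrt (r2 - m)"
    by (simp add: Lcrit_def)
  also have "arctan x + arctan (inverse x) = pi / 2"
    using arctan_inverse[OF \<open>0 < x\<close>] by simp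
  finally show "Lcrit r1 r2 r3 m = pi / 2 * sqrt (D / ((r2 - r1) * (r2 - r3)))"
    by (simp add: m(3) real_sqrt_divide)
qed

lemma Lcrit_attains:
  assumes "Lunder r1 r2 r3 < L"
  obtains \<mu> where "max r1 r3 < \<mu>" "\<mu> < r2" "Lcrit r1 r2 r3 \<mu> = L"
proof -
  have "\<forall>\<^sub>F m in at_left r2. L \<le> Lcrit r1 r2 r3 m"
    using Lcrit_tendsto_top by (simp add: filterlim_at_top)
  moreover have "\<forall>\<^sub>F m in at_left r2. m \<in> {max r1 r3<..<r2}"
    by (rule eventually_at_left_real[OF rates])
  ultimately have "\<forall>\<^sub>F m in at_left r2. L \<le> Lcrit r1 r2 r3 m \<and> m \<in> {max r1 r3<..<r2}"
    by (rule eventually_conj)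
  then obtain m where m: "L \<le> Lcrit r1 r2 r3 m" "max r1 r3 < m" "m < r2"
    using eventually_happens'[OF trivial_limit_at_left_real] by auto
  have "\<exists>\<mu>\<ge>max r1 r3. \<mu> \<le> m \<and> Lcrit r1 r2 r3 \<mu> = L"
    using assms m by (intro IVT' continuous_on_subset[OF Lcrit_continuous])
      (auto simp: Lcrit_max_eq_Lunder)
  then obtain \<mu> where \<mu>: "max r1 r3 \<le> \<mu>" "\<mu> \<le> m" "Lcrit r1 r2 r3 \<mu> = L" by blast
  with assms have "\<mu> \<noteq> max r1 r3" by (auto simp: Lcrit_max_eq_Lunder)
  with \<mu> m show ?thesis by (intro that[of \<mu>]) auto
qed

lemma mu1_above_Lunder:
  assumes "Lunder r1 r2 r3 < L"
  shows "max r1 r3 < mu1 r1 r2 r3 L" "mu1 r1 r2 r3 L < r2" "Lcrit r1 r2 r3 (mu1 r1 r2 r3 L) = L"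
proof -
  obtain \<mu> where \<mu>: "max r1 r3 < \<mu>" "\<mu> < r2" "Lcrit r1 r2 r3 \<mu> = L"
    using Lcrit_attains[OF assms] .
  have "\<mu>' = \<mu>" if "max r1 r3 < \<mu>' \<and> \<mu>' < r2 \<and> Lcrit r1 r2 r3 \<mu>' = L" for \<mu>'
    using strict_mono_on_eqD[OF Lcrit_strict_mono, of \<mu> \<mu>'] \<mu> that by auto
  with \<mu> have "mu1 r1 r2 r3 L = \<mu>"
    using assms unfolding mu1_def by (auto intro!: the_equality)
  with \<mu> show "max r1 r3 < mu1 r1 r2 r3 L" "mu1 r1 r2 r3 L < r2" "Lcrit r1 r2 r3 (mu1 r1 r2 r3 L) = L"
    by simp_all
qed

lemma mu1_bounds: "max r1 r3 \<le> mu1 r1 r2 r3 L" "mu1 r1 r2 r3 L < r2"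
  using mu1_above_Lunder[of L] rates by (cases "L \<le> Lunder r1 r2 r3"; simp add: mu1_def)+

lemma mu1_le_iff:
  assumes "max r1 r3 \<le> m" "m < r2"
  shows "mu1 r1 r2 r3 L \<le> m \<longleftrightarrow> L \<le> Lcrit r1 r2 r3 m"
proof (cases "L \<le> Lunder r1 r2 r3")
  case True
  moreover have "Lcrit r1 r2 r3 (max r1 r3) \<le> Lcrit r1 r2 r3 m"
    using assms rates by (intro strict_mono_on_leD[OF Lcrit_strict_mono]) auto
  ultimately show ?thesis
    using assms by (simp add: mu1_def Lcrit_max_eq_Lunder)
next
  case False
  then have "Lunder r1 r2 r3 < L" by simp
  from mu1_above_Lunder[OF this] assms show ?thesis
    using strict_mono_on_less[OF Lcrit_strict_mono, of m "mu1 r1 r2 r3 L"]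
    by (metis atLeastLessThan_iff less_imp_le not_le)
qed

lemma mu1_eqI:
  assumes "max r1 r3 \<le> m" "m < r2" "Lcrit r1 r2 r3 m = L"
  shows "mu1 r1 r2 r3 L = m"
proof (rule antisym)
  show "mu1 r1 r2 r3 L \<le> m" using assms by (simp add: mu1_le_iff)
  have "L \<le> Lcrit r1 r2 r3 (mu1 r1 r2 r3 L)" using mu1_bounds mu1_le_iff by blast
  with assms mu1_bounds show "m \<le> mu1 r1 r2 r3 L"
    using strict_mono_on_less[OF Lcrit_strict_mono, of "mu1 r1 r2 r3 L" m] by force
qed

lemma isCont_mu1: "isCont (mu1 r1 r2 r3) L"
  using mu1_bounds Lcrit_strict_mono mu1_le_iff by (rule isCont_if_le_iff)

lemma mu1_strict_mono:
  assumes "Lunder r1 r2 r3 < L1" "L1 < L2"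
  shows "mu1 r1 r2 r3 L1 < mu1 r1 r2 r3 L2"
  using mu1_above_Lunder[OF assms(1)] mu1_le_iff[of "mu1 r1 r2 r3 L1" L2] assms by force

lemma mu1_tendsto_top: "(mu1 r1 r2 r3 \<longlongrightarrow> r2) at_top"
proof (rule order_tendstoI)
  fix m assume "m < r2"
  define m' where "m' = max m (max r1 r3)"
  have "max r1 r3 \<le> m'" "m' < r2" using \<open>m < r2\<close> rates by (auto simp: m'_def)
  have "\<forall>\<^sub>F L in at_top. Lcrit r1 r2 r3 m' < L" by (rule eventually_gt_at_top)
  then show "\<forall>\<^sub>F L in at_top. m < mu1 r1 r2 r3 L"
  proof eventually_elim
    case (elim L)
    with \<open>max r1 r3 \<le> m'\<close> \<open>m' < r2\<close> have "m' < mu1 r1 r2 r3 L" by (simp add: mu1_le_iff not_le[symmetric])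
    then show ?case by (simp add: m'_def)
  qed
next
  fix a assume "r2 < a"
  then show "\<forall>\<^sub>F L in at_top. mu1 r1 r2 r3 L < a"
    using mu1_bounds(2) by (intro always_eventually allI) (meson order.strict_trans)
qed

lemma lambda1_eq_neg_mu1:
  assumes "0 < L"
  shows "lambda1 r1 r2 r3 L = - mu1 r1 r2 r3 L"
proof -
  define S where "S = {lam. \<exists>\<phi>. supersol r1 r2 r3 L lam \<phi>}"
  have upper: "lam \<le> - mu1 r1 r2 r3 L" if "lam \<in> S" for lam
  proof -
    from that obtain \<phi> where ss: "supersol r1 r2 r3 L lam \<phi>" by (auto simp: S_def)
    show ?thesis
    proof (cases "- lam < r2")
      case True
      have "max r1 r3 \<le> - lam" using supersol_le_neg_max[OF ss assms] by linarith
      moreover have "L \<le> Lcrit r1 r2 r3 (- lam)"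
        using ss assms True \<open>max r1 r3 \<le> - lam\<close> by (intro supersol_le_Lcrit) simp_all
      ultimately have "mu1 r1 r2 r3 L \<le> - lam" using mu1_le_iff[OF _ True] by simp
      then show ?thesis by simp
    qed (use mu1_bounds(2)[of L] in linarith)
  qed
  have mem: "- \<mu> \<in> S" if "mu1 r1 r2 r3 L < \<mu>" "\<mu> < r2" for \<mu>
  proof -
    have "max r1 r3 < \<mu>" using mu1_bounds(1)[of L] that by linarith
    moreover from this that have "L \<le> Lcrit r1 r2 r3 \<mu>" using mu1_le_iff[of \<mu> L] by simp
    ultimately show ?thesis
      using supersol_of_le_Lcrit[OF assms _ \<open>\<mu> < r2\<close>] by (simp add: S_def)
  qed
  have "Sup S = - mu1 r1 r2 r3 L"
  proof (rule cSup_eq_non_empty)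
    show "S \<noteq> {}" using mem[of "(mu1 r1 r2 r3 L + r2) / 2"] mu1_bounds(2)[of L] by auto
    show "lam \<le> - mu1 r1 r2 r3 L" if "lam \<in> S" for lam using that by (rule upper)
    fix y assume y: "\<And>lam. lam \<in> S \<Longrightarrow> lam \<le> y"
    have below: "w \<le> y" if "- r2 < w" "w < - mu1 r1 r2 r3 L" for w
      using y[OF mem[of "- w"]] that by simp
    have "- r2 < - mu1 r1 r2 r3 L" using mu1_bounds(2)[of L] by simp
    from dense_le_bounded[OF this below] show "- mu1 r1 r2 r3 L \<le> y" .
  qed
  then show ?thesis by (simp add: lambda1_def S_def)
qed

lemma lambda1_continuous: "continuous_on {0<..} (lambda1 r1 r2 r3)"
proof -
  have "continuous_on {0<..} (\<lambda>L. - mu1 r1 r2 r3 L)"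
    using isCont_mu1 by (intro continuous_intros continuous_at_imp_continuous_on) auto
  then show ?thesis by (rule continuous_on_eq) (simp add: lambda1_eq_neg_mu1)
qed

lemma lambda1_below_Lunder:
  "0 < L \<Longrightarrow> L \<le> Lunder r1 r2 r3 \<Longrightarrow> lambda1 r1 r2 r3 L = - max r1 r3"
  by (simp add: lambda1_eq_neg_mu1 mu1_def)

lemma lambda1_strict_antimono:
  "Lunder r1 r2 r3 < L1 \<Longrightarrow> L1 < L2 \<Longrightarrow> lambda1 r1 r2 r3 L2 < lambda1 r1 r2 r3 L1"
  using Lunder_nonneg mu1_strict_mono by (simp add: lambda1_eq_neg_mu1)

lemma lambda1_tendsto_Lunder: "(lambda1 r1 r2 r3 \<longlongrightarrow> - max r1 r3) (at_right (Lunder r1 r2 r3))"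
proof (rule Lim_transform_eventually)
  have "mu1 r1 r2 r3 (Lunder r1 r2 r3) = max r1 r3" by (simp add: mu1_def)
  with isCont_mu1 show "((\<lambda>L. - mu1 r1 r2 r3 L) \<longlongrightarrow> - max r1 r3) (at_right (Lunder r1 r2 r3))"
    by (intro tendsto_minus) (metis isCont_def filterlim_at_split)
  show "\<forall>\<^sub>F L in at_right (Lunder r1 r2 r3). - mu1 r1 r2 r3 L = lambda1 r1 r2 r3 L"
    using eventually_at_right_less by eventually_elim
      (use Lunder_nonneg in \<open>simp add: lambda1_eq_neg_mu1\<close>)
qed

lemma lambda1_balanced_length:
  "lambda1 r1 r2 r3 (pi / 2 * sqrt ((2 * r2 - r1 - r3) / ((r2 - r1) * (r2 - r3))))
     = - (r2\<^sup>2 - r1 * r3) / (2 * r2 - r1 - r3)"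
proof -
  define D Lb where "D = 2 * r2 - r1 - r3" and "Lb = pi / 2 * sqrt (D / ((r2 - r1) * (r2 - r3)))"
  have "0 < Lb" using rates by (auto simp: Lb_def D_def)
  moreover have "mu1 r1 r2 r3 Lb = (r2\<^sup>2 - r1 * r3) / D"
    using Lcrit_balanced_rate by (intro mu1_eqI) (auto simp: Lb_def D_def)
  ultimately have "lambda1 r1 r2 r3 Lb = - ((r2\<^sup>2 - r1 * r3) / D)" by (simp add: lambda1_eq_neg_mu1)
  then show ?thesis by (simp only: Lb_def D_def minus_divide_left)
qed

lemma lambda1_tendsto_top: "(lambda1 r1 r2 r3 \<longlongrightarrow> - r2) at_top"
proof (rule Lim_transform_eventually)
  show "((\<lambda>L. - mu1 r1 r2 r3 L) \<longlongrightarrow> - r2) at_top"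
    by (intro tendsto_minus mu1_tendsto_top)
  show "\<forall>\<^sub>F L in at_top. - mu1 r1 r2 r3 L = lambda1 r1 r2 r3 L"
    using eventually_gt_at_top[of 0] by eventually_elim (simp add: lambda1_eq_neg_mu1)
qed

end

theorem proposition4p1:
  fixes r1 r2 r3 :: real
  assumes "r1 > 0" "r2 > 0" "r3 > 0" "r2 > max r1 r3"
  shows "continuous_on {0<..} (lambda1 r1 r2 r3) \<and>
     (\<forall>L1\<in>{0<..Lunder r1 r2 r3}. \<forall>L2\<in>{0<..Lunder r1 r2 r3}.
            lambda1 r1 r2 r3 L1 = lambda1 r1 r2 r3 L2) \<and>
     (\<forall>L1\<in>{Lunder r1 r2 r3<..}. \<forall>L2\<in>{Lunder r1 r2 r3<..}.
            L1 < L2 \<longrightarrow> lambda1 r1 r2 r3 L2 < lambda1 r1 r2 r3 L1) \<and>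
     (lambda1 r1 r2 r3 \<longlongrightarrow> - max r1 r3) (at_right (Lunder r1 r2 r3)) \<and>
     lambda1 r1 r2 r3 (pi / 2 * sqrt ((2 * r2 - r1 - r3) / ((r2 - r1) * (r2 - r3))))
           = - (r2\<^sup>2 - r1 * r3) / (2 * r2 - r1 - r3) \<and>
     (lambda1 r1 r2 r3 \<longlongrightarrow> - r2) at_top"
proof -
  note rates = \<open>r2 > max r1 r3\<close>
  have "\<forall>L1\<in>{0<..Lunder r1 r2 r3}. \<forall>L2\<in>{0<..Lunder r1 r2 r3}. lambda1 r1 r2 r3 L1 = lambda1 r1 r2 r3 L2"
    using lambda1_below_Lunder[OF rates] by simp
  moreover have "\<forall>L1\<in>{Lunder r1 r2 r3<..}. \<forall>L2\<in>{Lunder r1 r2 r3<..}.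
      L1 < L2 \<longrightarrow> lambda1 r1 r2 r3 L2 < lambda1 r1 r2 r3 L1"
    using lambda1_strict_antimono[OF rates] by blast
  ultimately show ?thesis
    using lambda1_continuous[OF rates] lambda1_tendsto_Lunder[OF rates]
      lambda1_balanced_length[OF rates] lambda1_tendsto_top[OF rates]
    by blast
qed

end
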